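(* Let $\mathcal{A}'$ be an alphabet with $d\ge2$ letters and $\pi'$ an irreducible permutation on $\mathcal{A}'$, with $A$ the first letter of the top row and $E$ the first letter of the bottom row. Let $B\notin\mathcal{A}'$, $\mathcal{A}=\mathcal{A}'\cup\{B\}$, and let $C,D\in\mathcal{A}'$ with $(C,D)\ne(A,E)$ ($C=D$ allowed). Let $\pi$ be the permutation on $\mathcal{A}$ obtained from $\pi'$ by inserting $B$ immediately before $C$ in the top row and immediately before $D$ in the bottom row. Then $\pi$ is irreducible.
   Context: A permutation on an alphabet $\mathcal{A}$ is a pair $(\pi_0,\pi_1)$ of bijections $\mathcal{A}\to\{1,\dots,\#\mathcal{A}\}$, viewed as a top row and a bottom row listing the letters in order; it is irreducible if there is no $1\le k<\#\mathcal{A}$ such that the sets of the first $k$ letters of the top row and of the bottom row coincide. *)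

theory Defs
  imports Main
begin

text \<open>A permutation on a finite alphabet Al is a pair (pi0, pi1) of bijections
  Al -> {1..card Al} (top row, bottom row).\<close>
definition is_perm :: "'a set \<Rightarrow> ('a \<Rightarrow> nat) \<times> ('a \<Rightarrow> nat) \<Rightarrow> bool" where
  "is_perm Al p \<longleftrightarrow> finite Al \<and> bij_betw (fst p) Al {1..card Al} \<and> bij_betw (snd p) Al {1..card Al}"

definition irreducible_perm :: "'a set \<Rightarrow> ('a \<Rightarrow> nat) \<times> ('a \<Rightarrow> nat) \<Rightarrow> bool" where
  "irreducible_perm Al p \<longleftrightarrow>
     \<not> (\<exists>k. 1 \<le> k \<and> k < card Al \<and> {x \<in> Al. fst p x \<le> k} = {x \<in> Al. snd p x \<le> k})"

definition insert_before :: "'a \<Rightarrow> 'a \<Rightarrow> ('a \<Rightarrow> nat) \<Rightarrow> ('a \<Rightarrow> nat)" where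
  "insert_before b c f = (\<lambda>x. if x = b then f c else if f x < f c then f x else f x + 1)"

end

theory Submission
  imports Defs
begin

text \<open>If the top and bottom rows of the new permutation had a common proper prefix of length
  k, it would contain B either in both rows (when C and D lie in it) or in neither. Deleting B
  leaves a common prefix of the old rows of length k - 1 or k respectively. By irreducibility
  of the old permutation this is only possible for the empty prefix, i.e. k = 1 with C and D
  in the prefix, which forces C = A and D = E.\<close>

lemma prefix_insert_before:
  assumes "b \<notin> Al"
  shows "{x \<in> insert b Al. insert_before b c f x \<le> k} =
    (if f c \<le> k then insert b {x \<in> Al. f x < k} else {x \<in> Al. f x \<le> k})"
  using assms by (auto simp: insert_before_def)

lemma bij_betw_first_unique:
  fixes f :: "'a \<Rightarrow> nat"
  assumes "bij_betw f Al {1..n}" and "x \<in> Al" and "f x \<le> 1" and "a \<in> Al" and "f a = 1"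
  shows "x = a"
proof -
  have "f x \<in> {1..n}"
    using assms(1,2) by (rule bij_betw_apply)
  with assms(3) have "f x = 1"
    by simp
  then show ?thesis
    using assms by (metis bij_betw_imp_inj_on inj_onD)
qed

lemma common_prefix_insert_before:
  assumes "b \<notin> Al"
    and "{x \<in> insert b Al. insert_before b c f x \<le> k} =
      {x \<in> insert b Al. insert_before b d g x \<le> k}"
  shows "f c \<le> k \<and> g d \<le> k \<and> {x \<in> Al. f x < k} = {x \<in> Al. g x < k} \<or>
    k < f c \<and> k < g d \<and> {x \<in> Al. f x \<le> k} = {x \<in> Al. g x \<le> k}"
proof -
  have same_side: "f c \<le> k \<longleftrightarrow> g d \<le> k"
    using assms(2)[THEN eqset_imp_iff, of b] by (simp add: insert_before_def)
  show ?thesis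
  proof (cases "f c \<le> k")
    case True
    with same_side assms(2)
    have "insert b {x \<in> Al. f x < k} = insert b {x \<in> Al. g x < k}"
      unfolding prefix_insert_before[OF assms(1)] by simp
    with True same_side assms(1) show ?thesis
      by (simp add: insert_ident)
  next
    case False
    with same_side assms(2) show ?thesis
      unfolding prefix_insert_before[OF assms(1)] by simp
  qed
qed

theorem lemma5p4:
  fixes Al' :: "'a set" and p0 p1 :: "'a \<Rightarrow> nat" and a e b c d :: 'a
  assumes "finite Al'" and "card Al' \<ge> 2"
    and "is_perm Al' (p0, p1)" and "irreducible_perm Al' (p0, p1)"
    and "a \<in> Al'" and "p0 a = 1" and "e \<in> Al'" and "p1 e = 1"
    and "b \<notin> Al'" and "c \<in> Al'" and "d \<in> Al'" and "(c, d) \<noteq> (a, e)"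
  shows "irreducible_perm (insert b Al') (insert_before b c p0, insert_before b d p1)"
  unfolding irreducible_perm_def fst_conv snd_conv
proof (rule notI, elim exE conjE)
  fix k
  assume "1 \<le> k" and "k < card (insert b Al')"
    and common: "{x \<in> insert b Al'. insert_before b c p0 x \<le> k} =
      {x \<in> insert b Al'. insert_before b d p1 x \<le> k}"
  then have "k \<le> card Al'"
    using assms(1,9) by simp
  have bij0: "bij_betw p0 Al' {1..card Al'}" and bij1: "bij_betw p1 Al' {1..card Al'}"
    using assms(3) by (auto simp: is_perm_def)
  have no_common: "{x \<in> Al'. p0 x \<le> j} \<noteq> {x \<in> Al'. p1 x \<le> j}"
    if "1 \<le> j" "j < card Al'" for j
    using assms(4) that by (auto simp: irreducible_perm_def)
  from common_prefix_insert_before[OF assms(9) common] show False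
  proof (elim disjE conjE)
    assume "p0 c \<le> k" "p1 d \<le> k" "{x \<in> Al'. p0 x < k} = {x \<in> Al'. p1 x < k}"
    then have "{x \<in> Al'. p0 x \<le> k - 1} = {x \<in> Al'. p1 x \<le> k - 1}"
      using \<open>1 \<le> k\<close> by (simp add: less_eq_Suc_le le_diff_conv2)
    with no_common[of "k - 1"] \<open>1 \<le> k\<close> \<open>k \<le> card Al'\<close> have "k = 1"
      by (cases "k = 1") auto
    with \<open>p0 c \<le> k\<close> \<open>p1 d \<le> k\<close> have "c = a" and "d = e"
      using assms(5-11) bij0 bij1 by (auto intro: bij_betw_first_unique)
    with assms(12) show False
      by simp
  next
    assume "k < p0 c" "{x \<in> Al'. p0 x \<le> k} = {x \<in> Al'. p1 x \<le> k}"
    moreover have "p0 c \<le> card Al'"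
      using bij_betw_apply[OF bij0 assms(10)] by simp
    ultimately show False
      using no_common \<open>1 \<le> k\<close> by simp
  qed
qed

end
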